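(* Let $K_1,K_2,K_3>0$ and $t\ge 0$. For $\alpha>0$ put $$F_\alpha(v):=\int_0^\alpha f(v)\,v'^2-g(v)+K_2t^2\,dz,\qquad \mathcal{A}_\alpha:=\left\{v\in W^{1,2}(0,\alpha)\ :\ v(0)=0,\ v(\alpha)=\tfrac{\pi}{2}\right\},$$ where $f(v)=K_1\cos^2 v+K_3\sin^2 v$ and $g(v)=\dfrac{K_2^2t^2\cos^2 v}{K_2\cos^2 v+K_3\sin^2 v}$. If $0<\alpha<\beta<\infty$, then $$\inf_{v\in\mathcal{A}_\alpha}F_\alpha(v)>\inf_{w\in\mathcal{A}_\beta}F_\beta(w).$$
   Context: Functions in $W^{1,2}(0,\alpha)$ are real-valued. *)

theory Defs
  imports "HOL-Analysis.Analysis"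
begin

text \<open>W^{1,2}(0,a) in one dimension, represented by its (absolutely) continuous
  representative v on [0,a] together with a weak derivative w in L^2(0,a):
  v(x) = v(0) + integral of w over [0,x].\<close>
definition W12_pair :: "real \<Rightarrow> (real \<Rightarrow> real) \<Rightarrow> (real \<Rightarrow> real) \<Rightarrow> bool" where
  "W12_pair a v w \<longleftrightarrow>
     continuous_on {0..a} v \<and>
     w \<in> borel_measurable lborel \<and>
     set_integrable lborel {0..a} w \<and>
     set_integrable lborel {0..a} (\<lambda>x. (w x)\<^sup>2) \<and>
     (\<forall>x\<in>{0..a}. v x = v 0 + (LINT y:{0..x}|lborel. w y))"

definition f_coef :: "real \<Rightarrow> real \<Rightarrow> real \<Rightarrow> real" where
  "f_coef K1 K3 s = K1 * (cos s)\<^sup>2 + K3 * (sin s)\<^sup>2"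

definition g_coef :: "real \<Rightarrow> real \<Rightarrow> real \<Rightarrow> real \<Rightarrow> real" where
  "g_coef K2 K3 t s = (K2\<^sup>2 * t\<^sup>2 * (cos s)\<^sup>2) / (K2 * (cos s)\<^sup>2 + K3 * (sin s)\<^sup>2)"

definition F_energy :: "real \<Rightarrow> real \<Rightarrow> real \<Rightarrow> real \<Rightarrow> real \<Rightarrow> (real \<Rightarrow> real) \<Rightarrow> (real \<Rightarrow> real) \<Rightarrow> real" where
  "F_energy K1 K2 K3 t a v w =
     (LINT z:{0..a}|lborel. f_coef K1 K3 (v z) * (w z)\<^sup>2 - g_coef K2 K3 t (v z) + K2 * t\<^sup>2)"

definition admissible :: "real \<Rightarrow> ((real \<Rightarrow> real) \<times> (real \<Rightarrow> real)) set" where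
  "admissible a = {(v, w). W12_pair a v w \<and> v 0 = 0 \<and> v a = pi / 2}"

definition inf_energy :: "real \<Rightarrow> real \<Rightarrow> real \<Rightarrow> real \<Rightarrow> real \<Rightarrow> real" where
  "inf_energy K1 K2 K3 t a = Inf ((\<lambda>(v, w). F_energy K1 K2 K3 t a v w) ` admissible a)"

end

theory Submission
  imports Defs
begin

text \<open>
  Write the integrand as \<open>f(v) v'\<^sup>2 + h(v)\<close> with \<open>h = K\<^sub>2 t\<^sup>2 - g \<ge> 0\<close>, and for \<open>\<mu> > 0\<close> put
  \<open>\<phi>\<^sub>\<mu> = \<surd>f \<surd>(h + \<mu>)\<close> and \<open>I(\<mu>) = \<integral> \<phi>\<^sub>\<mu>\<close> over \<open>[0, \<pi>/2]\<close>. By AM-GM,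
  \<open>f(v) v'\<^sup>2 + h(v) \<ge> 2 \<phi>\<^sub>\<mu>(v) |v'| - \<mu>\<close>, and since \<open>v\<close> runs from \<open>0\<close> to \<open>\<pi>/2\<close> the chain rule gives
  \<open>\<integral> \<phi>\<^sub>\<mu>(v) |v'| \<ge> I(\<mu>)\<close>; hence \<open>F\<^sub>a \<ge> 2 I(\<mu>) - \<mu> a\<close> on \<open>\<A>\<^sub>a\<close>, for every \<open>a\<close> and \<open>\<mu>\<close>.
  Equality holds for the profile with \<open>f(v) v'\<^sup>2 = h(v) + \<mu>\<close>, the inverse of
  \<open>s \<mapsto> \<integral>\<^sub>0\<^sup>s \<surd>(f / (h + \<mu>))\<close>, whose domain has length \<open>T(\<mu>) = \<integral> \<surd>(f / (h + \<mu>))\<close> over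
  \<open>[0, \<pi>/2]\<close>. As \<open>h\<close> vanishes quadratically at \<open>0\<close>, \<open>T(\<mu>)\<close> grows like \<open>log (1/\<mu>)\<close> when
  \<open>\<mu> \<rightarrow> 0\<close>, while \<open>T(\<mu>) \<rightarrow> 0\<close> when \<open>\<mu> \<rightarrow> \<infinity>\<close>; so \<open>T(\<mu>) = \<beta>\<close> for some \<open>\<mu>\<close>, and then
  \<open>inf F\<^sub>\<beta> = 2 I(\<mu>) - \<mu> \<beta> < 2 I(\<mu>) - \<mu> \<alpha> \<le> inf F\<^sub>\<alpha>\<close>.
\<close>

lemma le_of_forall_pos_le_add_mult:
  fixes A B C :: real
  assumes "\<And>e. e > 0 \<Longrightarrow> A \<le> B + e * C"
  shows "A \<le> B"
proof (rule field_le_epsilon)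
  fix e :: real
  assume e: "e > 0"
  have "A \<le> B + e / (\<bar>C\<bar> + 1) * C"
    using e by (intro assms) (simp add: add_nonneg_pos)
  also have "\<dots> \<le> B + e / (\<bar>C\<bar> + 1) * \<bar>C\<bar>"
    using e by (intro add_left_mono mult_left_mono) (auto simp: add_nonneg_pos)
  also have "\<dots> \<le> B + e"
    using e by (simp add: field_simps add_nonneg_pos)
  finally show "A \<le> B + e" .
qed

lemma le_if_locally_mono:
  fixes P :: "real \<Rightarrow> real"
  assumes d: "0 < d" and ab: "a \<le> b"
    and step: "\<And>x y. a \<le> x \<Longrightarrow> x \<le> y \<Longrightarrow> y \<le> b \<Longrightarrow> y - x < d \<Longrightarrow> P x \<le> P y"
  shows "P a \<le> P b"
proof -
  have reach: "P a \<le> P x" if "a \<le> x" "x \<le> b" "x \<le> a + real n * (d / 2)" for n x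
    using that
  proof (induction n arbitrary: x)
    case 0
    then show ?case by simp
  next
    case (Suc n)
    let ?y = "a + real n * (d / 2)"
    show ?case
    proof (cases "x \<le> ?y")
      case True
      with Suc show ?thesis by blast
    next
      case False
      have "P a \<le> P ?y"
        using Suc.IH[of ?y] Suc.prems False d by simp
      also have "P ?y \<le> P x"
      proof (rule step)
        show "x - ?y < d"
          using Suc.prems(3) d by (simp add: field_simps)
      qed (use Suc.prems False d in auto)
      finally show ?thesis .
    qed
  qed
  obtain n :: nat where "(b - a) / (d / 2) < n"
    using reals_Archimedean2 by blast
  then have "b \<le> a + real n * (d / 2)"
    using d by (simp add: field_simps)
  then show ?thesis
    using reach ab by blast
qed

lemma mvt_closed_segment:
  fixes \<Phi> \<phi> :: "real \<Rightarrow> real"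
  assumes S: "is_interval S" "p \<in> S" "q \<in> S"
    and \<Phi>: "\<And>c. c \<in> S \<Longrightarrow> (\<Phi> has_real_derivative \<phi> c) (at c within S)"
  obtains c where "c \<in> closed_segment p q" "\<Phi> q - \<Phi> p = \<phi> c * (q - p)"
proof -
  have mvt: "\<exists>c\<in>{x..y}. \<Phi> y - \<Phi> x = \<phi> c * (y - x)" if "x \<le> y" "x \<in> S" "y \<in> S" for x y
  proof -
    have "{x..y} \<subseteq> S"
      using S(1) that unfolding is_interval_1 by (meson atLeastAtMost_iff subsetI)
    then have "(\<Phi> has_derivative (*) (\<phi> c)) (at c within {x..y})" if "c \<in> {x..y}" for c
      using \<Phi>[of c] that unfolding has_field_derivative_def by (blast intro: has_derivative_subset)
    then show ?thesis
      using mvt_very_simple[OF \<open>x \<le> y\<close>, of \<Phi> "\<lambda>c. (*) (\<phi> c)"] by simp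
  qed
  show thesis
  proof (cases "p \<le> q")
    case True
    then obtain c where "c \<in> {p..q}" "\<Phi> q - \<Phi> p = \<phi> c * (q - p)"
      using mvt[of p q] S by blast
    then show thesis
      using True by (intro that[of c]) (auto simp: closed_segment_eq_real_ivl)
  next
    case False
    then obtain c where "c \<in> {q..p}" "\<Phi> p - \<Phi> q = \<phi> c * (p - q)"
      using mvt[of q p] S by auto
    then show thesis
      using False by (intro that[of c]) (auto simp: closed_segment_eq_real_ivl algebra_simps)
  qed
qed

lemma mvt_along_continuous:
  fixes v \<Phi> \<phi> :: "real \<Rightarrow> real"
  assumes xy: "x \<le> y" and v: "continuous_on {x..y} v"
    and S: "is_interval S" "v ` {x..y} \<subseteq> S"
    and \<Phi>: "\<And>c. c \<in> S \<Longrightarrow> (\<Phi> has_real_derivative \<phi> c) (at c within S)"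
  obtains s where "s \<in> {x..y}" "\<Phi> (v y) - \<Phi> (v x) = \<phi> (v s) * (v y - v x)"
proof -
  have ends: "v x \<in> v ` {x..y}" "v y \<in> v ` {x..y}"
    using xy by auto
  obtain c where c: "c \<in> closed_segment (v x) (v y)"
    and eq: "\<Phi> (v y) - \<Phi> (v x) = \<phi> c * (v y - v x)"
    using mvt_closed_segment[OF S(1) _ _ \<Phi>] ends S(2) by blast
  have conn: "connected (v ` {x..y})"
    using connected_continuous_image[OF v connected_Icc] .
  have "closed_segment (v x) (v y) \<subseteq> v ` {x..y}"
    using connected_contains_Icc[OF conn ends] connected_contains_Icc[OF conn ends(2,1)]
    by (simp add: closed_segment_eq_real_ivl)
  with c eq show thesis
    using that by blast
qed

lemma absolutely_integrable_continuous_mult: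
  fixes g w :: "real \<Rightarrow> real"
  assumes g: "continuous_on {a..b} g" and w: "w absolutely_integrable_on {a..b}"
  shows "(\<lambda>x. g x * w x) absolutely_integrable_on {a..b}"
proof (rule absolutely_integrable_bounded_measurable_product_real[OF _ _ _ w])
  show "g \<in> borel_measurable (lebesgue_on {a..b})"
    by (rule continuous_imp_measurable_on_sets_lebesgue[OF g]) simp
  show "bounded (g ` {a..b})"
    by (rule compact_imp_bounded[OF compact_continuous_image[OF g compact_Icc]])
qed simp

lemma antiderivative_comp_increment_le:
  fixes v w \<phi> \<Phi> g :: "real \<Rightarrow> real"
  assumes xy: "x \<le> y" and v: "continuous_on {x..y} v"
    and w: "w absolutely_integrable_on {x..y}" and vw: "v y - v x = integral {x..y} w"
    and S: "is_interval S" "v ` {x..y} \<subseteq> S"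
    and \<phi>: "\<And>s. s \<in> S \<Longrightarrow> 0 \<le> \<phi> s"
    and \<Phi>: "\<And>s. s \<in> S \<Longrightarrow> (\<Phi> has_real_derivative \<phi> s) (at s within S)"
    and g: "\<And>r s. r \<in> {x..y} \<Longrightarrow> s \<in> {x..y} \<Longrightarrow> \<phi> (v s) \<le> g r"
    and gw: "(\<lambda>r. g r * \<bar>w r\<bar>) integrable_on {x..y}"
  shows "\<Phi> (v y) - \<Phi> (v x) \<le> integral {x..y} (\<lambda>r. g r * \<bar>w r\<bar>)"
proof -
  obtain s where s: "s \<in> {x..y}" and mvt: "\<Phi> (v y) - \<Phi> (v x) = \<phi> (v s) * (v y - v x)"
    using mvt_along_continuous[OF xy v S \<Phi>] by blast
  have \<phi>s: "0 \<le> \<phi> (v s)"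
    using \<phi> S(2) s by blast
  have aw: "(\<lambda>r. \<bar>w r\<bar>) integrable_on {x..y}"
    using set_lebesgue_integral_eq_integral(1)[OF absolutely_integrable_norm[OF w]] by (simp add: o_def)
  have "\<Phi> (v y) - \<Phi> (v x) \<le> \<phi> (v s) * \<bar>v y - v x\<bar>"
    unfolding mvt using \<phi>s by (intro mult_left_mono) auto
  also have "\<dots> \<le> \<phi> (v s) * integral {x..y} (\<lambda>r. \<bar>w r\<bar>)"
    unfolding vw using integral_norm_bound_integral[OF set_lebesgue_integral_eq_integral(1)[OF w] aw] \<phi>s
    by (intro mult_left_mono) auto
  also have "\<dots> = integral {x..y} (\<lambda>r. \<phi> (v s) * \<bar>w r\<bar>)"
    by simp
  also have "\<dots> \<le> integral {x..y} (\<lambda>r. g r * \<bar>w r\<bar>)"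
    using g[OF _ s] aw gw by (intro integral_le integrable_on_mult_right mult_right_mono) auto
  finally show ?thesis .
qed

context
  fixes a :: real and v w \<phi> \<Phi> :: "real \<Rightarrow> real" and S :: "real set"
  assumes a: "0 \<le> a" and v: "continuous_on {0..a} v"
    and w: "w absolutely_integrable_on {0..a}"
    and vw: "\<And>x. x \<in> {0..a} \<Longrightarrow> v x = v 0 + integral {0..x} w"
    and S: "is_interval S" "v ` {0..a} \<subseteq> S"
    and \<phi>: "continuous_on S \<phi>" "\<And>s. s \<in> S \<Longrightarrow> 0 \<le> \<phi> s"
    and \<Phi>: "\<And>s. s \<in> S \<Longrightarrow> (\<Phi> has_real_derivative \<phi> s) (at s within S)"
begin

lemma antiderivative_comp_le_integral_add:
  assumes e: "e > 0"
  shows "\<Phi> (v a) - \<Phi> (v 0) \<le> integral {0..a} (\<lambda>x. (\<phi> (v x) + e) * \<bar>w x\<bar>)"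
proof -
  have \<phi>v: "continuous_on {0..a} (\<lambda>x. \<phi> (v x))"
    using continuous_on_compose2[OF \<phi>(1) v S(2)] .
  obtain d where d: "d > 0" and close: "\<And>x y. x \<in> {0..a} \<Longrightarrow> y \<in> {0..a} \<Longrightarrow>
      dist y x < d \<Longrightarrow> dist (\<phi> (v y)) (\<phi> (v x)) < e"
    using compact_uniformly_continuous[OF \<phi>v compact_Icc] e
    unfolding uniformly_continuous_on_def by metis
  define F where "F r = (\<phi> (v r) + e) * \<bar>w r\<bar>" for r
  have F: "F integrable_on {0..a}"
    unfolding F_def using \<phi>v absolutely_integrable_norm[OF w]
    by (intro set_lebesgue_integral_eq_integral(1) absolutely_integrable_continuous_mult continuous_intros)
       (auto simp: o_def)
  have split: "integral {0..y} g = integral {0..x} g + integral {x..y} g"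
    if "g integrable_on {0..a}" "0 \<le> x" "x \<le> y" "y \<le> a" for g :: "real \<Rightarrow> real" and x y
    using Henstock_Kurzweil_Integration.integral_combine[of 0 x y g] that
      integrable_on_subinterval[OF that(1), of 0 y]
    by auto
  \<comment> \<open>\<open>\<Phi> \<circ> v\<close> need not be differentiable; but on intervals shorter than \<open>d\<close> the
    oscillation of \<open>\<phi> \<circ> v\<close> is below \<open>e\<close>, which bounds the increments of \<open>\<Phi> \<circ> v\<close>.\<close>
  have "integral {0..0} F - \<Phi> (v 0) \<le> integral {0..a} F - \<Phi> (v a)"
  proof (rule le_if_locally_mono[OF d a])
    fix x y
    assume xy: "0 \<le> x" "x \<le> y" "y \<le> a" "y - x < d"
    then have sub: "{x..y} \<subseteq> {0..a}"
      by auto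
    have "\<Phi> (v y) - \<Phi> (v x) \<le> integral {x..y} F"
      unfolding F_def
    proof (rule antiderivative_comp_increment_le[OF xy(2) continuous_on_subset[OF v sub]
          absolutely_integrable_on_subinterval[OF w sub] _ S(1) _ \<phi>(2) \<Phi>])
      show "v y - v x = integral {x..y} w"
        using vw[of x] vw[of y] split[OF set_lebesgue_integral_eq_integral(1)[OF w] xy(1-3)] xy
        by auto
      show "(\<lambda>r. (\<phi> (v r) + e) * \<bar>w r\<bar>) integrable_on {x..y}"
        using integrable_on_subinterval[OF F sub] unfolding F_def .
      fix r s
      assume "r \<in> {x..y}" "s \<in> {x..y}"
      then have "dist (\<phi> (v r)) (\<phi> (v s)) < e"
        using close[of s r] sub xy by (auto simp: dist_real_def)
      then show "\<phi> (v s) \<le> \<phi> (v r) + e"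
        by (simp add: dist_real_def)
    qed (use S(2) sub in auto)
    then show "integral {0..x} F - \<Phi> (v x) \<le> integral {0..y} F - \<Phi> (v y)"
      using split[OF F xy(1-3)] by simp
  qed
  then show ?thesis
    unfolding F_def by simp
qed

lemma antiderivative_comp_le_integral:
  "\<Phi> (v a) - \<Phi> (v 0) \<le> integral {0..a} (\<lambda>x. \<phi> (v x) * \<bar>w x\<bar>)"
proof (rule le_of_forall_pos_le_add_mult)
  have \<phi>v: "continuous_on {0..a} (\<lambda>x. \<phi> (v x))"
    using continuous_on_compose2[OF \<phi>(1) v S(2)] .
  have aw: "(\<lambda>x. \<bar>w x\<bar>) absolutely_integrable_on {0..a}"
    using absolutely_integrable_norm[OF w] by (simp add: o_def)
  fix e :: real
  assume "e > 0"
  have "integral {0..a} (\<lambda>x. (\<phi> (v x) + e) * \<bar>w x\<bar>)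
      = integral {0..a} (\<lambda>x. \<phi> (v x) * \<bar>w x\<bar>) + e * integral {0..a} (\<lambda>x. \<bar>w x\<bar>)"
    using set_lebesgue_integral_eq_integral(1)[OF absolutely_integrable_continuous_mult[OF \<phi>v aw]]
      set_lebesgue_integral_eq_integral(1)[OF aw]
    unfolding distrib_right by (subst integral_add) (auto intro: integrable_on_mult_right)
  then show "\<Phi> (v a) - \<Phi> (v 0)
      \<le> integral {0..a} (\<lambda>x. \<phi> (v x) * \<bar>w x\<bar>) + e * integral {0..a} (\<lambda>x. \<bar>w x\<bar>)"
    using antiderivative_comp_le_integral_add[OF \<open>e > 0\<close>] by simp
qed

end

lemma W12_pairD:
  fixes v w :: "real \<Rightarrow> real"
  assumes "W12_pair a v w"
  shows "continuous_on {0..a} v" "w absolutely_integrable_on {0..a}"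
    and "\<And>x. x \<in> {0..a} \<Longrightarrow> v x = v 0 + integral {0..x} w"
proof -
  have int: "set_integrable lborel {0..a} w"
    using assms unfolding W12_pair_def by blast
  show "continuous_on {0..a} v"
    using assms unfolding W12_pair_def by blast
  have lborel_int: "integrable lborel (\<lambda>x. indicator {0..a} x *\<^sub>R w x)"
    using int unfolding set_integrable_def .
  then show "w absolutely_integrable_on {0..a}"
    using integrable_completion[OF borel_measurable_integrable[OF lborel_int]]
    unfolding set_integrable_def by simp
  fix x
  assume x: "x \<in> {0..a}"
  have "set_integrable lborel {0..x} w"
    by (rule set_integrable_subset[OF int]) (use x in auto)
  then have "(LINT y:{0..x}|lborel. w y) = integral {0..x} w"
    by (rule set_borel_integral_eq_integral(2))
  moreover have "v x = v 0 + (LINT y:{0..x}|lborel. w y)"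
    using assms x unfolding W12_pair_def by blast
  ultimately show "v x = v 0 + integral {0..x} w"
    by simp
qed

lemma W12_pair_of_has_derivative:
  fixes v v' :: "real \<Rightarrow> real"
  assumes L: "0 \<le> L" and v: "continuous_on {0..L} v" and v': "continuous_on {0..L} v'"
    and der: "\<And>x. x \<in> {0<..<L} \<Longrightarrow> (v has_real_derivative v' x) (at x)"
  shows "W12_pair L v (\<lambda>x. indicator {0..L} x * v' x)"
proof -
  define w where "w x = indicator {0..L} x * v' x" for x
  have restrict: "indicator {0..L} x *\<^sub>R g (w x) = indicator {0..L} x *\<^sub>R g (v' x)" for g :: "real \<Rightarrow> real" and x
    unfolding w_def by (simp add: indicator_def)
  have w_int: "set_integrable lborel {0..L} w"
    using borel_integrable_compact[OF compact_Icc v'] unfolding set_integrable_def restrict[where g="\<lambda>y. y"] .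
  have "set_integrable lborel {0..L} (\<lambda>x. (w x)\<^sup>2)"
    using borel_integrable_compact[OF compact_Icc continuous_on_power[OF v', of 2]]
    unfolding set_integrable_def restrict[where g="\<lambda>y. y\<^sup>2"] .
  moreover have "w \<in> borel_measurable lborel"
    using borel_measurable_continuous_on_indicator[OF _ v'] unfolding w_def by simp
  moreover have "v x = v 0 + (LINT y:{0..x}|lborel. w y)" if x: "x \<in> {0..L}" for x
  proof -
    have "(v' has_integral (v x - v 0)) {0..x}"
    proof (rule fundamental_theorem_of_calculus_interior)
      show "continuous_on {0..x} v"
        by (rule continuous_on_subset[OF v]) (use x in auto)
    qed (use x der in \<open>auto simp: has_real_derivative_iff_has_vector_derivative\<close>)
    then have "(w has_integral (v x - v 0)) {0..x}"
      by (rule has_integral_eq[rotated]) (use x in \<open>auto simp: w_def\<close>)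
    moreover have "set_integrable lborel {0..x} w"
      by (rule set_integrable_subset[OF w_int]) (use x in auto)
    ultimately show ?thesis
      by (simp add: set_borel_integral_eq_integral(2) integral_unique)
  qed
  ultimately show ?thesis
    using v w_int unfolding W12_pair_def w_def by blast
qed

lemma has_real_derivative_primitive:
  fixes p :: "real \<Rightarrow> real"
  assumes p: "continuous_on UNIV p" and s: "0 < s"
  shows "((\<lambda>s. integral {0..s} p) has_real_derivative p s) (at s)"
proof -
  have "((\<lambda>s. integral {0..s} p) has_real_derivative p s) (at s within {0..s + 1})"
    using s by (intro integral_has_real_derivative continuous_on_subset[OF p]) auto
  then show ?thesis
    using s by (simp add: at_within_Icc_at)
qed

lemma primitive_less:
  fixes p :: "real \<Rightarrow> real"
  assumes p: "continuous_on UNIV p" "\<And>s. p s > 0" and s: "0 \<le> s" "s < s'"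
  shows "integral {0..s} p < integral {0..s'} p"
proof -
  have "continuous_on {s..s'} (\<lambda>s. integral {0..s} p)"
    using s continuous_on_subset[OF p(1)]
    by (intro continuous_on_subset[OF indefinite_integral_continuous_1[of p 0 s']]
          integrable_continuous_real) auto
  moreover have "\<exists>y. ((\<lambda>s. integral {0..s} p) has_real_derivative y) (at x) \<and> y > 0" if "s < x" for x
    using has_real_derivative_primitive[OF p(1), of x] p(2)[of x] that s by auto
  ultimately show ?thesis
    using DERIV_pos_imp_increasing_open[OF \<open>s < s'\<close>] by blast
qed

lemma inverse_of_primitive:
  fixes p :: "real \<Rightarrow> real"
  assumes p: "continuous_on UNIV p" "\<And>s. p s > 0" and S: "0 < S"
    and L: "integral {0..S} p = L"
  obtains v where "continuous_on {0..L} v" "v 0 = 0" "v L = S"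
    "\<And>x. x \<in> {0..L} \<Longrightarrow> v x \<in> {0..S}"
    "\<And>x. x \<in> {0<..<L} \<Longrightarrow> v x \<in> {0<..<S}"
    "\<And>x. x \<in> {0<..<L} \<Longrightarrow> (v has_real_derivative inverse (p (v x))) (at x)"
proof -
  define z where "z s = integral {0..s} p" for s
  have z_cont: "continuous_on {0..S} z"
    unfolding z_def using p(1)
    by (intro indefinite_integral_continuous_1 integrable_continuous_real)
       (auto intro: continuous_on_subset)
  have z_less: "z s < z s'" if "0 \<le> s" "s < s'" for s s'
    unfolding z_def using primitive_less[OF p that] .
  have inj: "inj_on z {0..S}"
    by (rule strict_mono_on_imp_inj_on) (auto simp: strict_mono_on_def intro: z_less)
  have z0: "z 0 = 0" and zS: "z S = L"
    unfolding z_def using L by simp_all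
  have img: "z ` {0..S} = {0..L}"
  proof
    show "z ` {0..S} \<subseteq> {0..L}"
      using z_less[of 0] z_less[of _ S] S z0 zS by (force simp: le_less)
    have "connected (z ` {0..S})"
      using connected_continuous_image[OF z_cont connected_Icc] .
    then show "{0..L} \<subseteq> z ` {0..S}"
      by (rule connected_contains_Icc) (use S z0 zS in \<open>auto intro!: image_eqI\<close>)
  qed
  define v where "v = inv_into {0..S} z"
  have vz: "v (z s) = s" if "s \<in> {0..S}" for s
    unfolding v_def using inj that by simp
  have zv: "z (v x) = x" if "x \<in> {0..L}" for x
    using that unfolding v_def img[symmetric] by (rule f_inv_into_f)
  have v_range: "v x \<in> {0..S}" if "x \<in> {0..L}" for x
    using that unfolding v_def img[symmetric] by (rule inv_into_into)
  have v_cont: "continuous_on {0..L} v"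
    using continuous_on_inv[OF z_cont compact_Icc] vz img by auto
  have v_interior: "v x \<in> {0<..<S}" if "x \<in> {0<..<L}" for x
    using v_range[of x] zv[of x] z0 zS that by (force simp: le_less)
  show thesis
  proof (rule that[OF v_cont _ _ v_range v_interior])
    show "v 0 = 0" "v L = S"
      using vz[of 0] vz[of S] S z0 zS by simp_all
    fix x
    assume x: "x \<in> {0<..<L}"
    show "(v has_real_derivative inverse (p (v x))) (at x)"
    proof (rule DERIV_inverse_function[where f = z and a = 0 and b = L])
      show "(z has_real_derivative p (v x)) (at (v x))"
        unfolding z_def using has_real_derivative_primitive[OF p(1)] v_interior[OF x] by simp
      show "isCont v x"
        using continuous_on_interior[OF v_cont] x by simp
    qed (use x p(2) zv in \<open>auto simp: less_imp_neq[symmetric]\<close>)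
  qed
qed

lemma min_le_cos_sin_combination: "min a b \<le> a * (cos s)\<^sup>2 + b * (sin s)\<^sup>2"
  for a b s :: real
proof -
  have "min a b = min a b * ((cos s)\<^sup>2 + (sin s)\<^sup>2)"
    by simp
  also have "\<dots> \<le> a * (cos s)\<^sup>2 + b * (sin s)\<^sup>2"
    unfolding distrib_left by (intro add_mono mult_right_mono) auto
  finally show ?thesis .
qed

lemma cos_sin_combination_le_max: "a * (cos s)\<^sup>2 + b * (sin s)\<^sup>2 \<le> max a b"
  for a b s :: real
proof -
  have "a * (cos s)\<^sup>2 + b * (sin s)\<^sup>2 \<le> max a b * (cos s)\<^sup>2 + max a b * (sin s)\<^sup>2"
    by (intro add_mono mult_right_mono) auto
  also have "\<dots> = max a b"
    by (simp flip: distrib_left)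
  finally show ?thesis .
qed

lemma has_integral_inverse_affine:
  fixes a b c X :: real
  assumes a: "a > 0" and b: "b > 0" and X: "X \<ge> 0"
  shows "((\<lambda>s. c / (a * s + b)) has_integral c / a * (ln (a * X + b) - ln b)) {0..X}"
proof -
  have pos: "a * s + b > 0" if "0 \<le> s" for s
    using a b that by (simp add: add_nonneg_pos)
  have "((\<lambda>s. c / (a * s + b)) has_integral c / a * ln (a * X + b) - c / a * ln (a * 0 + b)) {0..X}"
  proof (rule fundamental_theorem_of_calculus_interior[OF X])
    show "continuous_on {0..X} (\<lambda>s. c / a * ln (a * s + b))"
      using pos by (intro continuous_intros) (auto simp: less_imp_neq[symmetric])
    fix s
    assume "s \<in> {0<..<X}"
    then have "a * s + b > 0"
      using pos by simp
    then have "((\<lambda>s. c / a * ln (a * s + b)) has_real_derivative c / a * (a / (a * s + b))) (at s)"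
      by (auto intro!: derivative_eq_intros)
    then show "((\<lambda>s. c / a * ln (a * s + b)) has_vector_derivative c / (a * s + b)) (at s)"
      using a by (simp add: has_real_derivative_iff_has_vector_derivative)
  qed
  then show ?thesis
    by (simp add: right_diff_distrib)
qed

locale elastic_constants =
  fixes K1 K2 K3 t :: real
  assumes K1: "K1 > 0" and K2: "K2 > 0" and K3: "K3 > 0"
begin

abbreviation f :: "real \<Rightarrow> real" where
  "f \<equiv> f_coef K1 K3"

definition h :: "real \<Rightarrow> real" where
  "h s = K2 * t\<^sup>2 - g_coef K2 K3 t s"

lemma f_ge: "min K1 K3 \<le> f s"
  unfolding f_coef_def by (rule min_le_cos_sin_combination)

lemma f_pos: "0 < f s"
  using f_ge[of s] K1 K3 by linarith

lemma f_le: "f s \<le> max K1 K3"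
  unfolding f_coef_def by (rule cos_sin_combination_le_max)

lemma continuous_on_f [continuous_intros]: "continuous_on S f"
  unfolding f_coef_def by (intro continuous_intros)

lemma h_eq: "h s = K2 * K3 * t\<^sup>2 * (sin s)\<^sup>2 / (K2 * (cos s)\<^sup>2 + K3 * (sin s)\<^sup>2)"
proof -
  have "0 < K2 * (cos s)\<^sup>2 + K3 * (sin s)\<^sup>2"
    using min_le_cos_sin_combination[of K2 K3 s] K2 K3 by linarith
  then show ?thesis
    unfolding h_def g_coef_def by (simp add: field_simps power2_eq_square)
qed

lemma h_nonneg: "0 \<le> h s"
  unfolding h_eq using K2 K3 by simp

lemma h_le_quadratic:
  obtains C where "C > 0" "\<And>s. h s \<le> C * s\<^sup>2"
proof
  let ?m = "min K2 K3"
  have m: "?m > 0"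
    using K2 K3 by simp
  have A: "0 \<le> K2 * K3 * t\<^sup>2"
    using K2 K3 by simp
  show "0 < K2 * K3 * t\<^sup>2 / ?m + 1"
    using A m by (simp add: add_nonneg_pos)
  fix s
  have "h s \<le> K2 * K3 * t\<^sup>2 * (sin s)\<^sup>2 / ?m"
    unfolding h_eq using min_le_cos_sin_combination[of K2 K3 s] m A
    by (intro divide_left_mono) auto
  also have "\<dots> \<le> K2 * K3 * t\<^sup>2 * s\<^sup>2 / ?m"
    using A m abs_sin_x_le_abs_x[of s]
    by (intro divide_right_mono mult_left_mono) (auto simp: abs_le_square_iff)
  also have "\<dots> \<le> (K2 * K3 * t\<^sup>2 / ?m + 1) * s\<^sup>2"
    by (simp add: algebra_simps)
  finally show "h s \<le> (K2 * K3 * t\<^sup>2 / ?m + 1) * s\<^sup>2" .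
qed

lemma continuous_on_h [continuous_intros]: "continuous_on S h"
proof -
  have "K2 * (cos s)\<^sup>2 + K3 * (sin s)\<^sup>2 \<noteq> 0" for s
    using min_le_cos_sin_combination[of K2 K3 s] K2 K3 by linarith
  then show ?thesis
    unfolding h_def g_coef_def by (intro continuous_intros) auto
qed

text \<open>In the notation above, \<open>calibration \<mu> = \<phi>\<^sub>\<mu>\<close>, \<open>calibration_integral \<mu> = I(\<mu>)\<close> and
  \<open>domain_length \<mu> = T(\<mu>)\<close>; \<open>inv_speed \<mu> s\<close> is \<open>1 / v'\<close> at the point where the optimal
  profile takes the value \<open>s\<close>.\<close>

definition calibration :: "real \<Rightarrow> real \<Rightarrow> real" where
  "calibration \<mu> s = sqrt (f s) * sqrt (h s + \<mu>)"

definition inv_speed :: "real \<Rightarrow> real \<Rightarrow> real" where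
  "inv_speed \<mu> s = sqrt (f s) / sqrt (h s + \<mu>)"

definition domain_length :: "real \<Rightarrow> real" where
  "domain_length \<mu> = integral {0..pi/2} (inv_speed \<mu>)"

definition calibration_integral :: "real \<Rightarrow> real" where
  "calibration_integral \<mu> = integral {0..pi/2} (calibration \<mu>)"

lemma continuous_on_calibration [continuous_intros]: "\<mu> \<ge> 0 \<Longrightarrow> continuous_on S (calibration \<mu>)"
  unfolding calibration_def by (intro continuous_intros)

lemma continuous_on_inv_speed [continuous_intros]: "\<mu> > 0 \<Longrightarrow> continuous_on S (inv_speed \<mu>)"
  unfolding inv_speed_def using h_nonneg
  by (intro continuous_intros) (auto simp: add_nonneg_pos less_imp_neq[symmetric])

lemma calibration_nonneg: "\<mu> \<ge> 0 \<Longrightarrow> 0 \<le> calibration \<mu> s"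
  unfolding calibration_def using f_pos[of s] h_nonneg[of s] by simp

lemma inv_speed_pos: "\<mu> > 0 \<Longrightarrow> 0 < inv_speed \<mu> s"
  unfolding inv_speed_def using f_pos[of s] h_nonneg[of s] by simp

lemma energy_density_ge:
  assumes "\<mu> \<ge> 0"
  shows "2 * (calibration \<mu> s * \<bar>x\<bar>) - \<mu> \<le> f s * x\<^sup>2 + h s"
proof -
  let ?A = "sqrt (f s)" and ?B = "sqrt (h s + \<mu>)"
  have "?A\<^sup>2 = f s" "?B\<^sup>2 = h s + \<mu>"
    using f_pos[of s] h_nonneg[of s] assms by simp_all
  moreover have "0 \<le> (?A * \<bar>x\<bar> - ?B)\<^sup>2"
    by simp
  ultimately show ?thesis
    unfolding calibration_def by (simp add: power2_eq_square algebra_simps)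
qed

lemma F_energy_eq_integral:
  assumes "W12_pair a v w"
  shows "(\<lambda>z. f (v z) * (w z)\<^sup>2 + h (v z)) integrable_on {0..a}"
    and "F_energy K1 K2 K3 t a v w = integral {0..a} (\<lambda>z. f (v z) * (w z)\<^sup>2 + h (v z))"
proof -
  have v: "continuous_on {0..a} v" and w: "w \<in> borel_measurable lborel"
    and w2: "set_integrable lborel {0..a} (\<lambda>x. (w x)\<^sup>2)"
    using assms unfolding W12_pair_def by blast+
  have hv: "set_integrable lborel {0..a} (\<lambda>z. h (v z))"
    unfolding set_integrable_def
    using borel_integrable_compact[OF compact_Icc continuous_on_compose2[OF continuous_on_h v subset_UNIV]]
    by simp
  have "set_integrable lborel {0..a} (\<lambda>z. f (v z) * (w z)\<^sup>2)"
    unfolding set_integrable_def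
  proof (rule Bochner_Integration.integrable_bound)
    show "integrable lborel (\<lambda>x. indicator {0..a} x *\<^sub>R (max K1 K3 * (w x)\<^sup>2))"
      using set_integrable_mult_right[OF w2] unfolding set_integrable_def .
    have "(\<lambda>x. indicator {0..a} x * f (v x)) \<in> borel_measurable lborel"
      using borel_measurable_continuous_on_indicator[OF _ continuous_on_compose2[OF continuous_on_f v subset_UNIV]]
      by simp
    then have "(\<lambda>x. (indicator {0..a} x * f (v x)) * (w x)\<^sup>2) \<in> borel_measurable lborel"
      using w by measurable
    then show "(\<lambda>x. indicator {0..a} x *\<^sub>R (f (v x) * (w x)\<^sup>2)) \<in> borel_measurable lborel"
      by (simp add: mult.assoc)
    have "\<bar>f (v x)\<bar> \<le> \<bar>max K1 K3\<bar>" for x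
      using f_le[of "v x"] f_pos[of "v x"] by simp
    then show "AE x in lborel. norm (indicator {0..a} x *\<^sub>R (f (v x) * (w x)\<^sup>2))
        \<le> norm (indicator {0..a} x *\<^sub>R (max K1 K3 * (w x)\<^sup>2))"
      by (intro AE_I2) (auto simp: indicator_def abs_mult intro: mult_right_mono)
  qed
  then have int: "set_integrable lborel {0..a} (\<lambda>z. f (v z) * (w z)\<^sup>2 + h (v z))"
    using hv by (rule set_integral_add(1))
  then show "(\<lambda>z. f (v z) * (w z)\<^sup>2 + h (v z)) integrable_on {0..a}"
    by (rule set_borel_integral_eq_integral(1))
  show "F_energy K1 K2 K3 t a v w = integral {0..a} (\<lambda>z. f (v z) * (w z)\<^sup>2 + h (v z))"
    unfolding F_energy_def h_def using set_borel_integral_eq_integral(2)[OF int[unfolded h_def]]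
    by (simp add: algebra_simps)
qed

lemma calibration_integral_le:
  assumes adm: "(v, w) \<in> admissible a" and a: "0 \<le> a" and \<mu>: "\<mu> \<ge> 0"
  shows "calibration_integral \<mu> \<le> integral {0..a} (\<lambda>z. calibration \<mu> (v z) * \<bar>w z\<bar>)"
proof -
  have W: "W12_pair a v w" and v0: "v 0 = 0" and va: "v a = pi/2"
    using adm unfolding admissible_def by auto
  note v = W12_pairD(1)[OF W]
  obtain c d where cd: "v ` {0..a} = {c..d}"
    using continuous_image_closed_interval[OF a v] by blast
  have "v 0 \<in> {c..d}" "v a \<in> {c..d}"
    using cd a by auto
  then have c0: "c \<le> 0" and d: "pi/2 \<le> d"
    using v0 va by auto
  define \<Phi> where "\<Phi> x = integral {c..x} (calibration \<mu>)" for x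
  have "\<Phi> (v a) - \<Phi> (v 0) \<le> integral {0..a} (\<lambda>z. calibration \<mu> (v z) * \<bar>w z\<bar>)"
  proof (rule antiderivative_comp_le_integral[OF a v W12_pairD(2,3)[OF W]])
    show "is_interval {c..d}" "v ` {0..a} \<subseteq> {c..d}"
      using cd by (auto simp: is_interval_cc)
    fix s
    assume "s \<in> {c..d}"
    then show "(\<Phi> has_real_derivative calibration \<mu> s) (at s within {c..d})"
      unfolding \<Phi>_def using \<mu> by (intro integral_has_real_derivative continuous_intros)
  qed (use \<mu> in \<open>auto intro: continuous_intros calibration_nonneg\<close>)
  moreover have "integral {c..0} (calibration \<mu>) + calibration_integral \<mu> = integral {c..pi/2} (calibration \<mu>)"
    unfolding calibration_integral_def using c0 \<mu>
    by (intro Henstock_Kurzweil_Integration.integral_combine integrable_continuous_real continuous_intros) auto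
  ultimately show ?thesis
    unfolding \<Phi>_def v0 va by simp
qed

lemma F_energy_ge:
  assumes adm: "(v, w) \<in> admissible a" and a: "0 \<le> a" and \<mu>: "\<mu> \<ge> 0"
  shows "2 * calibration_integral \<mu> - \<mu> * a \<le> F_energy K1 K2 K3 t a v w"
proof -
  have W: "W12_pair a v w"
    using adm unfolding admissible_def by auto
  have cal_int: "(\<lambda>z. calibration \<mu> (v z) * \<bar>w z\<bar>) integrable_on {0..a}"
  proof (rule set_lebesgue_integral_eq_integral(1))
    show "(\<lambda>z. calibration \<mu> (v z) * \<bar>w z\<bar>) absolutely_integrable_on {0..a}"
      using absolutely_integrable_norm[OF W12_pairD(2)[OF W]] W12_pairD(1)[OF W] \<mu>
      by (intro absolutely_integrable_continuous_mult continuous_on_compose2[OF continuous_on_calibration])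
         (auto simp: o_def)
  qed
  have "2 * calibration_integral \<mu> - \<mu> * a
      \<le> 2 * integral {0..a} (\<lambda>z. calibration \<mu> (v z) * \<bar>w z\<bar>) - \<mu> * a"
    using calibration_integral_le[OF adm a \<mu>] by simp
  also have "\<dots> = integral {0..a} (\<lambda>z. 2 * (calibration \<mu> (v z) * \<bar>w z\<bar>) - \<mu>)"
    using cal_int a by (subst integral_diff) (auto intro: integrable_on_mult_right)
  also have "\<dots> \<le> integral {0..a} (\<lambda>z. f (v z) * (w z)\<^sup>2 + h (v z))"
    using cal_int F_energy_eq_integral(1)[OF W] energy_density_ge[OF \<mu>]
    by (intro integral_le integrable_diff integrable_on_mult_right) auto
  also have "\<dots> = F_energy K1 K2 K3 t a v w"
    using F_energy_eq_integral(2)[OF W] by simp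
  finally show ?thesis .
qed

lemma continuous_on_domain_length: "continuous_on {0<..} domain_length"
proof -
  have "continuous_on ({0<..} \<times> cbox 0 (pi/2)) (\<lambda>x. sqrt (f (snd x)) / sqrt (h (snd x) + fst x))"
    using h_nonneg
    by (intro continuous_intros continuous_on_compose2[OF continuous_on_f continuous_on_snd]
          continuous_on_compose2[OF continuous_on_h continuous_on_snd])
       (auto simp: add_nonneg_pos less_imp_neq[symmetric])
  then have "continuous_on ({0<..} \<times> cbox 0 (pi/2)) (\<lambda>(\<mu>, s). inv_speed \<mu> s)"
    by (simp add: inv_speed_def case_prod_beta)
  from integral_continuous_on_param[OF this] show ?thesis
    unfolding domain_length_def by (simp add: cbox_interval)
qed

lemma domain_length_le:
  assumes \<mu>: "\<mu> > 0"
  shows "domain_length \<mu> \<le> pi/2 * sqrt (max K1 K3) / sqrt \<mu>"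
proof -
  have "domain_length \<mu> \<le> integral {0..pi/2} (\<lambda>s. sqrt (max K1 K3) / sqrt \<mu>)"
    unfolding domain_length_def
  proof (rule integral_le)
    fix s
    have "sqrt (f s) \<le> sqrt (max K1 K3)"
      using f_le[of s] by simp
    moreover have "sqrt \<mu> \<le> sqrt (h s + \<mu>)"
      using h_nonneg[of s] by simp
    ultimately show "inv_speed \<mu> s \<le> sqrt (max K1 K3) / sqrt \<mu>"
      unfolding inv_speed_def using \<mu> K1 by (intro frac_le) auto
  qed (use \<mu> in \<open>auto intro: integrable_continuous_real continuous_intros\<close>)
  then show ?thesis
    by simp
qed

lemma domain_length_ge_log:
  assumes C: "C > 0" "\<And>s. h s \<le> C * s\<^sup>2" and \<mu>: "\<mu> > 0"
  shows "sqrt (min K1 K3) / sqrt C * (ln (sqrt C * (pi/2) + sqrt \<mu>) - ln (sqrt \<mu>))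
    \<le> domain_length \<mu>"
proof -
  let ?a = "sqrt C" and ?b = "sqrt \<mu>" and ?c = "sqrt (min K1 K3)"
  have a: "?a > 0" and b: "?b > 0"
    using C \<mu> by simp_all
  note log_int = has_integral_inverse_affine[OF a b, of "pi/2" ?c, simplified]
  have "integral {0..pi/2} (\<lambda>s. ?c / (?a * s + ?b)) \<le> domain_length \<mu>"
    unfolding domain_length_def
  proof (rule integral_le)
    fix s
    assume "s \<in> {0..pi/2}"
    then have s: "s \<ge> 0"
      by simp
    have "(?a * s + ?b)\<^sup>2 = C * s\<^sup>2 + 2 * ?a * ?b * s + \<mu>"
      using C \<mu> by (simp add: power2_eq_square algebra_simps)
    moreover have "0 \<le> 2 * ?a * ?b * s"
      using a b s by simp
    ultimately have "h s + \<mu> \<le> (?a * s + ?b)\<^sup>2"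
      using C(2)[of s] by linarith
    then have "sqrt (h s + \<mu>) \<le> ?a * s + ?b"
      using a b s by (simp add: real_le_lsqrt)
    moreover have "?c \<le> sqrt (f s)"
      using f_ge[of s] by simp
    moreover have "0 < sqrt (h s + \<mu>)"
      using h_nonneg[of s] \<mu> by simp
    ultimately show "?c / (?a * s + ?b) \<le> inv_speed \<mu> s"
      unfolding inv_speed_def using K1 K3 by (intro frac_le) auto
  qed (use log_int \<mu> in \<open>auto intro: integrable_continuous_real continuous_intros\<close>)
  then show ?thesis
    using integral_unique[OF log_int] by simp
qed

lemma domain_length_unbounded: "\<exists>\<mu>>0. L \<le> domain_length \<mu>"
proof -
  obtain C where C: "C > 0" "\<And>s. h s \<le> C * s\<^sup>2"
    using h_le_quadratic by blast
  let ?a = "sqrt C" and ?c = "sqrt (min K1 K3)"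
  have a: "?a > 0"
    using C by simp
  define b where "b = ?a * (pi/2) * exp (- (L * ?a / ?c))"
  have b: "b > 0"
    unfolding b_def using a by simp
  have "ln b = ln (?a * (pi/2)) + ln (exp (- (L * ?a / ?c)))"
    unfolding b_def using a by (subst ln_mult) auto
  then have "ln (?a * (pi/2)) - ln b = L * ?a / ?c"
    by simp
  then have "L = ?c / ?a * (ln (?a * (pi/2)) - ln b)"
    using a K1 K3 by simp
  also have "\<dots> \<le> ?c / ?a * (ln (?a * (pi/2) + b) - ln b)"
  proof -
    have "ln (?a * (pi/2)) \<le> ln (?a * (pi/2) + b)"
      using a b by (subst ln_le_cancel_iff) (auto intro: add_pos_pos)
    then show ?thesis
      using a K1 K3 by (intro mult_left_mono) auto
  qed
  also have "\<dots> \<le> domain_length (b\<^sup>2)"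
    using domain_length_ge_log[OF C, of "b\<^sup>2"] b by simp
  finally show ?thesis
    using b by (intro exI[of _ "b\<^sup>2"]) simp
qed

lemma domain_length_surj:
  assumes L: "L > 0"
  shows "\<exists>\<mu>>0. domain_length \<mu> = L"
proof -
  obtain \<mu>\<^sub>1 where \<mu>\<^sub>1: "\<mu>\<^sub>1 > 0" "L \<le> domain_length \<mu>\<^sub>1"
    using domain_length_unbounded by blast
  define \<mu>\<^sub>2 where "\<mu>\<^sub>2 = (pi/2 * sqrt (max K1 K3) / L)\<^sup>2"
  have \<mu>\<^sub>2: "\<mu>\<^sub>2 > 0" and "sqrt \<mu>\<^sub>2 = pi/2 * sqrt (max K1 K3) / L"
    unfolding \<mu>\<^sub>2_def using L K1 by simp_all
  then have "domain_length \<mu>\<^sub>2 \<le> L"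
    using domain_length_le[OF \<mu>\<^sub>2] L K1 by simp
  moreover have "{domain_length \<mu>\<^sub>2..domain_length \<mu>\<^sub>1} \<subseteq> domain_length ` {0<..}"
    using connected_continuous_image[OF continuous_on_domain_length] \<mu>\<^sub>1 \<mu>\<^sub>2
    by (intro connected_contains_Icc) auto
  ultimately have "L \<in> domain_length ` {0<..}"
    using \<mu>\<^sub>1 by auto
  then show ?thesis
    by force
qed

lemma f_mul_inverse_inv_speed_sq: "\<mu> > 0 \<Longrightarrow> f s * (inverse (inv_speed \<mu> s))\<^sup>2 = h s + \<mu>"
  using f_pos[of s] h_nonneg[of s]
  by (simp add: inv_speed_def power_inverse power_divide field_simps)

lemma calibration_mul_inverse_inv_speed: "\<mu> > 0 \<Longrightarrow> calibration \<mu> s * inverse (inv_speed \<mu> s) = h s + \<mu>"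
  using f_pos[of s] h_nonneg[of s]
  by (simp add: calibration_def inv_speed_def field_simps flip: power2_eq_square)

context
  fixes \<mu> L :: real and v :: "real \<Rightarrow> real"
  assumes \<mu>: "\<mu> > 0" and L: "L > 0" and v: "continuous_on {0..L} v"
    and v0: "v 0 = 0" and vL: "v L = pi/2"
    and v_range: "\<And>x. x \<in> {0..L} \<Longrightarrow> v x \<in> {0..pi/2}"
    and v_interior: "\<And>x. x \<in> {0<..<L} \<Longrightarrow> v x \<in> {0<..<pi/2}"
    and v_der: "\<And>x. x \<in> {0<..<L} \<Longrightarrow> (v has_real_derivative inverse (inv_speed \<mu> (v x))) (at x)"
begin

lemma has_integral_h_along_profile:
  "((\<lambda>x. h (v x) + \<mu>) has_integral calibration_integral \<mu>) {0..L}"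
proof -
  define \<Phi> where "\<Phi> u = integral {0..u} (calibration \<mu>)" for u
  have "((\<lambda>x. h (v x) + \<mu>) has_integral \<Phi> (v L) - \<Phi> (v 0)) {0..L}"
  proof (rule fundamental_theorem_of_calculus_interior)
    have "continuous_on {0..pi/2} \<Phi>"
      unfolding \<Phi>_def using \<mu>
      by (intro indefinite_integral_continuous_1 integrable_continuous_real continuous_intros) auto
    then show "continuous_on {0..L} (\<lambda>x. \<Phi> (v x))"
      using v_range by (intro continuous_on_compose2[OF _ v]) auto
    fix x
    assume x: "x \<in> {0<..<L}"
    have "(\<Phi> has_real_derivative calibration \<mu> (v x)) (at (v x) within {0..pi/2})"
      unfolding \<Phi>_def using v_interior[OF x] \<mu>
      by (intro integral_has_real_derivative continuous_intros) auto
    then have "(\<Phi> has_real_derivative calibration \<mu> (v x)) (at (v x))"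
      using v_interior[OF x] by (simp add: at_within_Icc_at)
    from DERIV_chain2[OF this v_der[OF x]]
    show "((\<lambda>x. \<Phi> (v x)) has_vector_derivative h (v x) + \<mu>) (at x)"
      by (simp add: calibration_mul_inverse_inv_speed[OF \<mu>] has_real_derivative_iff_has_vector_derivative)
  qed (use L in simp)
  then show ?thesis
    unfolding \<Phi>_def v0 vL calibration_integral_def by simp
qed

lemma profile_admissible_energy:
  defines "w \<equiv> \<lambda>x. indicator {0..L} x * inverse (inv_speed \<mu> (v x))"
  shows "(v, w) \<in> admissible L"
    and "F_energy K1 K2 K3 t L v w = 2 * calibration_integral \<mu> - \<mu> * L"
proof -
  have "continuous_on {0..L} (\<lambda>x. inverse (inv_speed \<mu> (v x)))"
    using inv_speed_pos[OF \<mu>]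
    by (intro continuous_on_inverse continuous_on_compose2[OF continuous_on_inv_speed[OF \<mu>] v])
       (auto simp: less_imp_neq[symmetric])
  then have W: "W12_pair L v w"
    unfolding w_def using L v_der by (intro W12_pair_of_has_derivative[OF _ v]) auto
  then show "(v, w) \<in> admissible L"
    unfolding admissible_def using v0 vL by simp
  have "F_energy K1 K2 K3 t L v w = integral {0..L} (\<lambda>x. f (v x) * (w x)\<^sup>2 + h (v x))"
    by (rule F_energy_eq_integral(2)[OF W])
  also have "\<dots> = integral {0..L} (\<lambda>x. 2 * (h (v x) + \<mu>) - \<mu>)"
    by (rule integral_cong) (simp add: w_def f_mul_inverse_inv_speed_sq[OF \<mu>])
  also have "\<dots> = 2 * calibration_integral \<mu> - \<mu> * L"
    using has_integral_diff[OF has_integral_mult_right[OF has_integral_h_along_profile, of 2]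
        has_integral_const_real[of \<mu> 0 L]] L
    by (simp add: mult.commute integral_unique)
  finally show "F_energy K1 K2 K3 t L v w = 2 * calibration_integral \<mu> - \<mu> * L" .
qed

end

lemma F_energy_attains_bound:
  assumes L: "L > 0" and \<mu>: "\<mu> > 0" and length: "domain_length \<mu> = L"
  shows "\<exists>v w. (v, w) \<in> admissible L \<and> F_energy K1 K2 K3 t L v w = 2 * calibration_integral \<mu> - \<mu> * L"
proof -
  obtain v where "continuous_on {0..L} v" "v 0 = 0" "v L = pi/2"
    "\<And>x. x \<in> {0..L} \<Longrightarrow> v x \<in> {0..pi/2}"
    "\<And>x. x \<in> {0<..<L} \<Longrightarrow> v x \<in> {0<..<pi/2}"
    "\<And>x. x \<in> {0<..<L} \<Longrightarrow> (v has_real_derivative inverse (inv_speed \<mu> (v x))) (at x)"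
    using inverse_of_primitive[OF continuous_on_inv_speed[OF \<mu>] inv_speed_pos[OF \<mu>], of "pi/2" L]
      length unfolding domain_length_def by auto
  from profile_admissible_energy[OF \<mu> L this] show ?thesis
    by blast
qed

lemma inf_energy_le:
  assumes "L > 0" "\<mu> > 0" "domain_length \<mu> = L"
  shows "inf_energy K1 K2 K3 t L \<le> 2 * calibration_integral \<mu> - \<mu> * L"
proof -
  let ?E = "(\<lambda>(v, w). F_energy K1 K2 K3 t L v w) ` admissible L"
  obtain v w where "(v, w) \<in> admissible L"
    and vw: "F_energy K1 K2 K3 t L v w = 2 * calibration_integral \<mu> - \<mu> * L"
    using F_energy_attains_bound[OF assms] by blast
  then have "F_energy K1 K2 K3 t L v w \<in> ?E"
    by force
  moreover have "bdd_below ?E"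
    unfolding bdd_below_def using F_energy_ge[OF _ _ less_imp_le[OF \<open>\<mu> > 0\<close>]] \<open>L > 0\<close>
    by fastforce
  ultimately show ?thesis
    unfolding inf_energy_def vw by (rule cInf_lower)
qed

lemma inf_energy_ge:
  assumes "a > 0" "\<mu> \<ge> 0"
  shows "2 * calibration_integral \<mu> - \<mu> * a \<le> inf_energy K1 K2 K3 t a"
proof -
  have "admissible a \<noteq> {}"
    using F_energy_attains_bound[OF \<open>a > 0\<close>] domain_length_surj[OF \<open>a > 0\<close>] by blast
  then show ?thesis
    unfolding inf_energy_def using F_energy_ge[OF _ _ \<open>\<mu> \<ge> 0\<close>] \<open>a > 0\<close>
    by (intro cInf_greatest) auto
qed

end

theorem mainTheorem2:
  fixes K1 K2 K3 t \<alpha> \<beta> :: real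
  assumes "K1 > 0" "K2 > 0" "K3 > 0" "t \<ge> 0"
    and "0 < \<alpha>" "\<alpha> < \<beta>"
  shows "inf_energy K1 K2 K3 t \<alpha> > inf_energy K1 K2 K3 t \<beta>"
proof -
  interpret elastic_constants K1 K2 K3 t
    using assms by unfold_locales
  \<comment> \<open>\<open>t\<close> enters only through \<open>t\<^sup>2\<close>.\<close>
  have \<beta>: "0 < \<beta>"
    using assms by linarith
  obtain \<mu> where \<mu>: "\<mu> > 0" "domain_length \<mu> = \<beta>"
    using domain_length_surj[OF \<beta>] by blast
  have "inf_energy K1 K2 K3 t \<beta> \<le> 2 * calibration_integral \<mu> - \<mu> * \<beta>"
    using inf_energy_le[OF \<beta> \<mu>] .
  moreover have "2 * calibration_integral \<mu> - \<mu> * \<alpha> \<le> inf_energy K1 K2 K3 t \<alpha>"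
    using inf_energy_ge[of \<alpha> \<mu>] \<mu> assms by simp
  moreover have "\<mu> * \<alpha> < \<mu> * \<beta>"
    using \<mu> assms by simp
  ultimately show ?thesis
    by linarith
qed

end
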